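(* In the multi-period newsvendor setting described in the context, suppose the demands are independent with $X_t\sim\mathrm{Pois}(\lambda_t)$ for $t\in\{1,\dots,T\}$. Then for every fixed $\boldsymbol q\in\mathbb N_0^T$, the expected cost $C_{\boldsymbol\lambda}(\boldsymbol q)$ is convex in $\lambda_t$ for each $t=1,\dots,T$.
   Context: There are $T$ periods; $q_t\in\mathbb N_0$ is the order delivered at the start of period $t$, $X_t$ the demand in period $t$. Inventory: $I_t=\sum_{k=1}^t(q_k-X_k)$, $I_t^+=\max\{I_t,0\}$, $I_t^-=\max\{-I_t,0\}$. Nonnegative constants: holding cost $h$, backorder cost $b$, price $p$; unit ordering costs $w_t$. The expected cost under rates $\boldsymbol\lambda$ is $$C_{\boldsymbol\lambda}(\boldsymbol q)=p\,\mathbb E_{\boldsymbol\lambda}[I_T^-]+\sum_{t=1}^T\Big(h\,\mathbb E_{\boldsymbol\lambda}[I_t^+]+b\,\mathbb E_{\boldsymbol\lambda}[I_t^-]+w_tq_t-p\,\mathbb E_{\boldsymbol\lambda}[X_t]\Big).$$ *)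

theory Defs
  imports "HOL-Probability.Probability"
begin

text \<open>Joint law of the independent demands X_1, ..., X_T with X_t ~ Pois(lam t).
  A demand path is a function nat => nat; outside {1..T} it is 0.\<close>
definition demand_pmf :: "nat \<Rightarrow> (nat \<Rightarrow> real) \<Rightarrow> (nat \<Rightarrow> nat) pmf" where
  "demand_pmf T lam = Pi_pmf {1..T} 0 (\<lambda>t. poisson_pmf (lam t))"

definition inv_level :: "(nat \<Rightarrow> nat) \<Rightarrow> (nat \<Rightarrow> nat) \<Rightarrow> nat \<Rightarrow> real" where
  "inv_level q X t = (\<Sum>k=1..t. real (q k) - real (X k))"

definition pos_part :: "real \<Rightarrow> real" where "pos_part x = max x 0"
definition neg_part :: "real \<Rightarrow> real" where "neg_part x = max (- x) 0"

definition exp_cost ::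
  "nat \<Rightarrow> real \<Rightarrow> real \<Rightarrow> real \<Rightarrow> (nat \<Rightarrow> real) \<Rightarrow> (nat \<Rightarrow> real) \<Rightarrow> (nat \<Rightarrow> nat) \<Rightarrow> real" where
  "exp_cost T h b p w lam q =
     (let M = demand_pmf T lam in
      p * measure_pmf.expectation M (\<lambda>X. neg_part (inv_level q X T))
      + (\<Sum>t=1..T. h * measure_pmf.expectation M (\<lambda>X. pos_part (inv_level q X t))
                  + b * measure_pmf.expectation M (\<lambda>X. neg_part (inv_level q X t))
                  + w t * real (q t)
                  - p * measure_pmf.expectation M (\<lambda>X. real (X t))))"

end

theory Submission
  imports Defs
begin

text \<open>Fix a period t and condition on all demands other than X_t. For every s the on-hand stock
  I_s^+ is then a bounded function g of X_t with nonnegative second differences, and its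
  expectation is the Poisson transform e^{-x} \<Sum>_n g(n) x^n / n! of g at x = \<lambda>_t.
  Differentiating the transform gives the transform of the forward difference of g, so its
  second derivative is the transform of the second difference of g, which is nonnegative.
  Everything else in the cost is affine in \<lambda>_t, because I^- = I^+ - I and
  E[I_s] = \<Sum>_{k \<le> s} (q_k - \<lambda>_k).\<close>

definition egf :: "(nat \<Rightarrow> real) \<Rightarrow> real \<Rightarrow> real" where
  "egf g x = (\<Sum>n. g n / fact n * x ^ n)"

definition poisson_transform :: "(nat \<Rightarrow> real) \<Rightarrow> real \<Rightarrow> real" where
  "poisson_transform g x = exp (- x) * egf g x"

definition fwd_diff :: "(nat \<Rightarrow> real) \<Rightarrow> nat \<Rightarrow> real" where
  "fwd_diff g n = g (Suc n) - g n"

lemma summable_egf: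
  fixes x :: real
  assumes "\<And>n. \<bar>g n\<bar> \<le> B"
  shows "summable (\<lambda>n. g n / fact n * x ^ n)"
proof (rule summable_comparison_test)
  show "\<exists>N. \<forall>n\<ge>N. norm (g n / fact n * x ^ n) \<le> B * (\<bar>x\<bar> ^ n / fact n)"
  proof (intro exI allI impI)
    fix n
    have "norm (g n / fact n * x ^ n) = \<bar>g n\<bar> * (\<bar>x\<bar> ^ n / fact n)"
      by (simp add: abs_mult power_abs)
    also have "\<dots> \<le> B * (\<bar>x\<bar> ^ n / fact n)"
      using assms by (intro mult_right_mono) auto
    finally show "norm (g n / fact n * x ^ n) \<le> B * (\<bar>x\<bar> ^ n / fact n)" .
  qed
  show "summable (\<lambda>n. B * (\<bar>x\<bar> ^ n / fact n))"
    using exp_converges[of "\<bar>x\<bar>"] by (intro summable_mult) (simp add: sums_iff field_simps)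
qed

lemma egf_has_real_derivative:
  assumes "\<And>n. \<bar>g n\<bar> \<le> B"
  shows "(egf g has_real_derivative egf (\<lambda>n. g (Suc n)) x) (at x)"
proof -
  have "((\<lambda>x. \<Sum>n. g n / fact n * x ^ n) has_real_derivative
      (\<Sum>n. diffs (\<lambda>n. g n / fact n) n * x ^ n)) (at x)"
    using summable_egf[OF assms] by (intro termdiffs_strong_converges_everywhere) auto
  moreover have "diffs (\<lambda>n. g n / fact n) n = g (Suc n) / fact n" for n
    by (simp add: diffs_def fact_Suc del: of_nat_Suc)
  ultimately show ?thesis
    by (simp add: egf_def[abs_def])
qed

lemma abs_fwd_diff_le:
  assumes "\<And>n. \<bar>g n\<bar> \<le> B"
  shows "\<bar>fwd_diff g n\<bar> \<le> 2 * B"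
  using assms[of n] assms[of "Suc n"] unfolding fwd_diff_def by linarith

lemma poisson_transform_has_real_derivative:
  assumes "\<And>n. \<bar>g n\<bar> \<le> B"
  shows "(poisson_transform g has_real_derivative poisson_transform (fwd_diff g) x) (at x)"
proof -
  have diff: "egf (fwd_diff g) x = egf (\<lambda>n. g (Suc n)) x - egf g x"
    using suminf_diff[OF summable_egf[of "\<lambda>n. g (Suc n)" B x] summable_egf[OF assms]] assms
    by (simp add: egf_def fwd_diff_def diff_divide_distrib left_diff_distrib)
  have "((\<lambda>x. exp (- x) * egf g x) has_real_derivative exp (- x) * egf (fwd_diff g) x) (at x)"
    unfolding diff
    by (auto intro!: derivative_eq_intros egf_has_real_derivative[OF assms] simp: algebra_simps)
  then show ?thesis
    by (simp add: poisson_transform_def[abs_def])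
qed

lemma poisson_transform_nonneg:
  assumes "\<And>n. \<bar>g n\<bar> \<le> B" "\<And>n. g n \<ge> 0" "x \<ge> 0"
  shows "poisson_transform g x \<ge> 0"
  unfolding poisson_transform_def egf_def
  using assms by (intro mult_nonneg_nonneg suminf_nonneg summable_egf) auto

lemma convex_on_poisson_transform:
  assumes "\<And>n. \<bar>g n\<bar> \<le> B" "\<And>n. fwd_diff (fwd_diff g) n \<ge> 0"
  shows "convex_on {0..} (poisson_transform g)"
proof (rule convex_on_realI)
  have bound1: "\<bar>fwd_diff g n\<bar> \<le> 2 * B" for n
    by (rule abs_fwd_diff_le[OF assms(1)])
  have bound2: "\<bar>fwd_diff (fwd_diff g) n\<bar> \<le> 2 * (2 * B)" for n
    by (rule abs_fwd_diff_le[OF bound1])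
  fix x y :: real
  assume "x \<in> {0..}" "x \<le> y"
  show "poisson_transform (fwd_diff g) x \<le> poisson_transform (fwd_diff g) y"
  proof (rule DERIV_nonneg_imp_increasing_open[OF \<open>x \<le> y\<close>])
    fix z
    assume "x < z"
    then show "\<exists>d. (poisson_transform (fwd_diff g) has_real_derivative d) (at z) \<and> d \<ge> 0"
      using \<open>x \<in> {0..}\<close>
      by (intro exI[of _ "poisson_transform (fwd_diff (fwd_diff g)) z"] conjI
          poisson_transform_has_real_derivative[OF bound1]
          poisson_transform_nonneg[OF bound2 assms(2)]) auto
  next
    show "continuous_on {x..y} (poisson_transform (fwd_diff g))"
      by (intro continuous_at_imp_continuous_on ballI
          DERIV_isCont[OF poisson_transform_has_real_derivative[OF bound1]])
  qed
qed (auto intro: poisson_transform_has_real_derivative[OF assms(1)])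

lemma expectation_poisson_pmf:
  assumes "x > 0" "\<And>n. \<bar>g n\<bar> \<le> B"
  shows "measure_pmf.expectation (poisson_pmf x) g = poisson_transform g x"
proof -
  have pmf_times: "pmf (poisson_pmf x) n * g n = exp (- x) * (g n / fact n * x ^ n)" for n
    using assms by (simp add: field_simps)
  have "norm (pmf (poisson_pmf x) n * g n) = exp (- x) * (\<bar>g n\<bar> / fact n * x ^ n)" for n
    using assms by (simp add: abs_mult field_simps)
  moreover have "summable (\<lambda>n. exp (- x) * (\<bar>g n\<bar> / fact n * x ^ n))"
    using assms by (intro summable_mult summable_egf[of _ B]) auto
  ultimately have "integrable (count_space UNIV) (\<lambda>n. pmf (poisson_pmf x) n * g n)"
    by (simp add: integrable_count_space_nat_iff)
  then have "measure_pmf.expectation (poisson_pmf x) g = (\<Sum>n. exp (- x) * (g n / fact n * x ^ n))"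
    unfolding measure_pmf_eq_density pmf_times[symmetric]
    by (subst integral_density) (auto simp: integral_count_space_nat)
  also have "\<dots> = poisson_transform g x"
    unfolding poisson_transform_def egf_def by (rule suminf_mult) (rule summable_egf[OF assms(2)])
  finally show ?thesis .
qed

lemma
  fixes r :: real
  assumes "r > 0"
  shows integrable_poisson_pmf_real: "integrable (poisson_pmf r) real"
    and expectation_poisson_pmf_real: "measure_pmf.expectation (poisson_pmf r) real = r"
proof -
  let ?f = "\<lambda>n. pmf (poisson_pmf r) n * real n"
  have "(\<lambda>n. real (Suc n) * (r ^ Suc n / fact (Suc n))) = (\<lambda>n. r * (r ^ n / fact n))"
    by (simp add: fact_Suc field_simps del: of_nat_Suc)
  then have "(\<lambda>n. real n * (r ^ n / fact n)) sums (r * exp r)"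
    using sums_mult[OF exp_converges[of r], of r] sums_Suc_iff[of "\<lambda>n. real n * (r ^ n / fact n)"]
    by (simp add: field_simps)
  from sums_mult[OF this, of "exp (- r)"]
  have "(\<lambda>n. exp (- r) * (real n * (r ^ n / fact n))) sums r"
    by (simp add: exp_minus field_simps)
  moreover have "?f = (\<lambda>n. exp (- r) * (real n * (r ^ n / fact n)))"
    using assms by (simp add: field_simps)
  ultimately have sums: "?f sums r"
    by simp
  then have integrable: "integrable (count_space UNIV) ?f"
    using assms by (simp add: integrable_count_space_nat_iff sums_iff)
  then show "integrable (poisson_pmf r) real"
    unfolding measure_pmf_eq_density by (subst integrable_density) auto
  show "measure_pmf.expectation (poisson_pmf r) real = r"
    unfolding measure_pmf_eq_density using integrable sums
    by (subst integral_density) (auto simp: integral_count_space_nat sums_iff)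
qed

lemma expectation_bind_pmf:
  fixes f :: "'b \<Rightarrow> real"
  assumes "\<And>y. \<bar>f y\<bar> \<le> B"
  shows "measure_pmf.expectation (bind_pmf M N) f =
    measure_pmf.expectation M (\<lambda>x. measure_pmf.expectation (N x) f)"
  unfolding measure_pmf_bind
  by (rule integral_bind[where K = "count_space UNIV" and B = B and B' = 1])
    (use assms in \<open>auto simp: measure_pmf.emeasure_space_1 measure_pmf.finite_measure_axioms
      measure_pmf_in_subprob_algebra\<close>)

lemma expectation_pair_pmf:
  fixes f :: "'a \<times> 'b \<Rightarrow> real"
  assumes "\<And>z. \<bar>f z\<bar> \<le> B"
  shows "measure_pmf.expectation (pair_pmf M N) f =
    measure_pmf.expectation M (\<lambda>x. measure_pmf.expectation N (\<lambda>y. f (x, y)))"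
  unfolding pair_pmf_def using assms
  by (simp add: expectation_bind_pmf[where B = B] integral_return)

lemma expectation_Pi_pmf_insert:
  fixes F :: "('a \<Rightarrow> 'b) \<Rightarrow> real"
  assumes "finite A" "t \<notin> A" "\<And>X. \<bar>F X\<bar> \<le> B"
  shows "measure_pmf.expectation (Pi_pmf (insert t A) d p) F =
    measure_pmf.expectation (p t) (\<lambda>y. measure_pmf.expectation (Pi_pmf A d p) (\<lambda>X. F (X(t := y))))"
  using assms(3)
  by (simp add: Pi_pmf_insert[OF assms(1,2)] case_prod_beta expectation_pair_pmf[where B = B])

lemma convex_on_cong:
  assumes "\<And>x. x \<in> S \<Longrightarrow> f x = g x" "convex_on S g"
  shows "convex_on S f"
  using assms convex_on_imp_convex[OF assms(2)]
  by (auto simp: convex_on_def dest: convexD)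

lemma convex_on_sum_fun:
  assumes "convex S" "finite I" "\<And>i. i \<in> I \<Longrightarrow> convex_on S (f i)"
  shows "convex_on S (\<lambda>x. \<Sum>i\<in>I. f i x)"
  using assms(2,3)
  by (induction I rule: finite_induct) (auto simp: convex_on_const assms(1))

lemma concave_on_sum_fun:
  assumes "convex S" "finite I" "\<And>i. i \<in> I \<Longrightarrow> concave_on S (f i)"
  shows "concave_on S (\<lambda>x. \<Sum>i\<in>I. f i x)"
  using convex_on_sum_fun[of S I "\<lambda>i x. - f i x"] assms
  by (simp add: concave_on_def sum_negf)

lemma
  fixes f :: "'a \<Rightarrow> real"
  assumes "convex S"
  shows convex_on_fun_upd: "convex_on S (\<lambda>x. (f(t := x)) k)"
    and concave_on_fun_upd: "concave_on S (\<lambda>x. (f(t := x)) k)"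
  using assms
  by (cases "k = t"; simp add: convex_on_ident concave_on_ident convex_on_const concave_on_const)+

lemma convex_on_expectation_Pi_pmf_poisson:
  fixes F :: "('a \<Rightarrow> nat) \<Rightarrow> real"
  assumes "finite I" "t \<in> I" "\<And>X. \<bar>F X\<bar> \<le> B"
    and "\<And>X n. 2 * F (X(t := Suc n)) \<le> F (X(t := n)) + F (X(t := Suc (Suc n)))"
  shows "convex_on {0<..}
    (\<lambda>x. measure_pmf.expectation (Pi_pmf I d (\<lambda>k. poisson_pmf ((lam(t := x)) k))) F)"
proof -
  define R where "R = Pi_pmf (I - {t}) d (\<lambda>k. poisson_pmf (lam k))"
  define G where "G n = measure_pmf.expectation R (\<lambda>X. F (X(t := n)))" for n
  have integrable: "integrable R (\<lambda>X. F (X(t := n)))" for n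
    using assms(3) by (intro measure_pmf.integrable_const_bound[where B = B]) auto
  have G_bounded: "\<bar>G n\<bar> \<le> B" for n
    unfolding G_def using assms(3) integrable
    by (auto simp: abs_le_iff minus_le_iff
        intro!: measure_pmf.integral_le_const measure_pmf.integral_ge_const)
  have G_second_diff: "fwd_diff (fwd_diff G) n \<ge> 0" for n
  proof -
    have "0 \<le> measure_pmf.expectation R
        (\<lambda>X. F (X(t := n)) + F (X(t := Suc (Suc n))) - 2 * F (X(t := Suc n)))"
      using assms(4) by (intro integral_nonneg_AE) (auto simp: algebra_simps)
    also have "\<dots> = G n + G (Suc (Suc n)) - 2 * G (Suc n)"
      unfolding G_def using integrable by simp
    finally show ?thesis
      by (simp add: fwd_diff_def)
  qed
  have "measure_pmf.expectation (Pi_pmf I d (\<lambda>k. poisson_pmf ((lam(t := x)) k))) F =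
      poisson_transform G x" if "x \<in> {0<..}" for x
  proof -
    let ?P = "\<lambda>k. poisson_pmf ((lam(t := x)) k)"
    have rest: "Pi_pmf (I - {t}) d ?P = R"
      unfolding R_def by (rule Pi_pmf_cong) auto
    have "measure_pmf.expectation (Pi_pmf I d ?P) F =
        measure_pmf.expectation (Pi_pmf (insert t (I - {t})) d ?P) F"
      using assms(2) by (simp add: insert_absorb)
    also have "\<dots> = measure_pmf.expectation (poisson_pmf x)
        (\<lambda>n. measure_pmf.expectation (Pi_pmf (I - {t}) d ?P) (\<lambda>X. F (X(t := n))))"
      using assms(1,3) by (subst expectation_Pi_pmf_insert[where B = B]) auto
    also have "\<dots> = measure_pmf.expectation (poisson_pmf x) G"
      unfolding G_def rest ..
    also have "\<dots> = poisson_transform G x"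
      using that G_bounded by (intro expectation_poisson_pmf) auto
    finally show ?thesis .
  qed
  moreover have "convex_on {0<..} (poisson_transform G)"
    using convex_on_poisson_transform[OF G_bounded G_second_diff] by (rule convex_on_subset) auto
  ultimately show ?thesis
    by (rule convex_on_cong)
qed

lemma inv_level_fun_upd:
  "inv_level q (X(t := n)) s = inv_level q (X(t := 0)) s - (if t \<in> {1..s} then real n else 0)"
proof -
  have "inv_level q (X(t := n)) s =
      (\<Sum>k=1..s. (real (q k) - real ((X(t := 0)) k)) - (if k = t then real n else 0))"
    unfolding inv_level_def by (intro sum.cong) auto
  then show ?thesis
    unfolding inv_level_def by (simp add: sum_subtractf)
qed

lemma abs_pos_part_inv_level_le: "\<bar>pos_part (inv_level q X s)\<bar> \<le> (\<Sum>k=1..s. real (q k))"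
proof -
  have "inv_level q X s \<le> (\<Sum>k=1..s. real (q k))"
    unfolding inv_level_def by (intro sum_mono) auto
  moreover have "0 \<le> (\<Sum>k=1..s. real (q k))"
    by (intro sum_nonneg) auto
  ultimately show ?thesis
    by (simp add: pos_part_def)
qed

lemma pos_part_inv_level_midpoint_convex:
  "2 * pos_part (inv_level q (X(t := Suc n)) s) \<le>
    pos_part (inv_level q (X(t := n)) s) + pos_part (inv_level q (X(t := Suc (Suc n))) s)"
proof -
  define a where "a = inv_level q (X(t := 0)) s"
  have "inv_level q (X(t := m)) s = a - (if t \<in> {1..s} then real m else 0)" for m
    unfolding a_def by (rule inv_level_fun_upd)
  then show ?thesis
    by (simp add: pos_part_def max_def)
qed

definition expected_on_hand :: "nat \<Rightarrow> (nat \<Rightarrow> real) \<Rightarrow> (nat \<Rightarrow> nat) \<Rightarrow> nat \<Rightarrow> real" where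
  "expected_on_hand T lam q s =
    measure_pmf.expectation (demand_pmf T lam) (\<lambda>X. pos_part (inv_level q X s))"

lemma convex_on_expected_on_hand:
  assumes "t \<in> {1..T}"
  shows "convex_on {0<..} (\<lambda>x. expected_on_hand T (lam(t := x)) q s)"
  unfolding expected_on_hand_def demand_pmf_def
  using assms abs_pos_part_inv_level_le pos_part_inv_level_midpoint_convex
  by (intro convex_on_expectation_Pi_pmf_poisson[where B = "\<Sum>k=1..s. real (q k)"]) auto

lemma demand_pmf_component:
  assumes "k \<in> {1..T}"
  shows "map_pmf (\<lambda>X. X k) (demand_pmf T lam) = poisson_pmf (lam k)"
  unfolding demand_pmf_def using assms by (subst Pi_pmf_component) auto

lemma
  assumes "lam k > 0" "k \<in> {1..T}"
  shows integrable_demand: "integrable (demand_pmf T lam) (\<lambda>X. real (X k))"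
    and expectation_demand: "measure_pmf.expectation (demand_pmf T lam) (\<lambda>X. real (X k)) = lam k"
  using integrable_poisson_pmf_real[OF assms(1)] expectation_poisson_pmf_real[OF assms(1)]
  unfolding demand_pmf_component[OF assms(2), symmetric] by simp_all

lemma
  assumes "\<forall>k\<in>{1..T}. lam k > 0" "s \<le> T"
  shows integrable_inv_level: "integrable (demand_pmf T lam) (\<lambda>X. inv_level q X s)"
    and expectation_inv_level:
      "measure_pmf.expectation (demand_pmf T lam) (\<lambda>X. inv_level q X s) = (\<Sum>k=1..s. real (q k) - lam k)"
  using assms integrable_demand[of lam _ T] expectation_demand[of lam _ T]
  by (auto simp: inv_level_def intro!: sum.cong)

lemma expectation_neg_part_inv_level:
  assumes "\<forall>k\<in>{1..T}. lam k > 0" "s \<le> T"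
  shows "measure_pmf.expectation (demand_pmf T lam) (\<lambda>X. neg_part (inv_level q X s)) =
    expected_on_hand T lam q s - (\<Sum>k=1..s. real (q k) - lam k)"
proof -
  have "neg_part (inv_level q X s) = pos_part (inv_level q X s) - inv_level q X s" for X
    by (simp add: pos_part_def neg_part_def)
  moreover have "integrable (demand_pmf T lam) (\<lambda>X. pos_part (inv_level q X s))"
    using abs_pos_part_inv_level_le
    by (intro measure_pmf.integrable_const_bound[where B = "\<Sum>k=1..s. real (q k)"]) auto
  ultimately show ?thesis
    using assms integrable_inv_level expectation_inv_level
    by (simp add: expected_on_hand_def)
qed

lemma exp_cost_eq:
  assumes "\<forall>k\<in>{1..T}. lam k > 0"
  shows "exp_cost T h b p w lam q =
    p * (expected_on_hand T lam q T - (\<Sum>k=1..T. real (q k) - lam k))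
    + (\<Sum>s=1..T. h * expected_on_hand T lam q s
        + b * (expected_on_hand T lam q s - (\<Sum>k=1..s. real (q k) - lam k))
        + w s * real (q s) - p * lam s)"
  unfolding exp_cost_def Let_def using assms
  by (auto simp: expectation_neg_part_inv_level expectation_demand expected_on_hand_def
      intro!: sum.cong)

theorem theorem5p3:
  fixes T :: nat and h b p :: real and w :: "nat \<Rightarrow> real"
    and lam :: "nat \<Rightarrow> real" and q :: "nat \<Rightarrow> nat"
  assumes "h \<ge> 0" and "b \<ge> 0" and "p \<ge> 0"
    and "\<forall>s\<in>{1..T}. lam s > 0"
  shows "\<forall>t\<in>{1..T}. convex_on {0<..} (\<lambda>x. exp_cost T h b p w (lam(t := x)) q)"
proof
  fix t
  assume t: "t \<in> {1..T}"
  have on_hand: "convex_on {0<..} (\<lambda>x. expected_on_hand T (lam(t := x)) q s)" for s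
    using t by (rule convex_on_expected_on_hand)
  have net_stock: "concave_on {0<..} (\<lambda>x. \<Sum>k=1..s. real (q k) - (lam(t := x)) k)" for s
    by (intro concave_on_sum_fun concave_on_diff concave_on_const[THEN iffD2] convex_on_fun_upd) auto
  have sales: "concave_on {0<..} (\<lambda>x. p * (lam(t := x)) s)" for s
    using assms(3) by (intro concave_on_cmul concave_on_fun_upd) auto
  have positive: "\<forall>k\<in>{1..T}. (lam(t := x)) k > 0" if "x \<in> {0<..}" for x
    using assms(4) that by auto
  show "convex_on {0<..} (\<lambda>x. exp_cost T h b p w (lam(t := x)) q)"
    by (rule convex_on_cong[OF exp_cost_eq[OF positive], rotated])
      (use assms(1-3) in \<open>intro convex_on_const[THEN iffD2] convex_on_add convex_on_diff
        convex_on_cmul convex_on_sum_fun on_hand net_stock sales; auto\<close>)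
qed

end
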